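(* Let $K,N$ be homogeneous bi-variate means and $G(s,t)=\sqrt{st}$. If $G$ is $(K,N)$-stabilized, i.e. $G(s,t)=K\big(N(s,G(s,t)),N(G(s,t),t)\big)$ for all $s,t>0$, then $G(s,t)=N(\sqrt s,\sqrt t)\,K(\sqrt s,\sqrt t)$ for all $s,t>0$, $G$ is also $(N,K)$-stabilized, and $N(s,t)K(s,t)=st$, i.e. $G\big(N(s,t),K(s,t)\big)=G(s,t)$, for all $s,t>0$.
   Context: A bi-variate mean is $M:(0,\infty)^2\to(0,\infty)$ with $\min(s,t)\le M(s,t)\le\max(s,t)$; homogeneous means $M(\lambda s,\lambda t)=\lambda M(s,t)$ for $\lambda,s,t>0$. $M$ is $(K,N)$-stabilized if $M(s,t)=K\big(N(s,M(s,t)),N(M(s,t),t)\big)$ for all $s,t>0$. *)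

theory Defs
  imports Complex_Main
begin

text \<open>A bi-variate mean on (0,oo)^2: positive-valued, between min and max.
  Functions are total on real x real; only values at positive arguments matter.\<close>
definition is_mean :: "(real \<Rightarrow> real \<Rightarrow> real) \<Rightarrow> bool" where
  "is_mean M \<longleftrightarrow> (\<forall>s>0. \<forall>t>0. M s t > 0 \<and> min s t \<le> M s t \<and> M s t \<le> max s t)"

definition homogeneous_mean :: "(real \<Rightarrow> real \<Rightarrow> real) \<Rightarrow> bool" where
  "homogeneous_mean M \<longleftrightarrow> is_mean M \<and>
     (\<forall>l>0. \<forall>s>0. \<forall>t>0. M (l * s) (l * t) = l * M s t)"

definition stabilized :: "(real \<Rightarrow> real \<Rightarrow> real) \<Rightarrow> (real \<Rightarrow> real \<Rightarrow> real) \<Rightarrow> (real \<Rightarrow> real \<Rightarrow> real) \<Rightarrow> bool" where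
  "stabilized M K N \<longleftrightarrow> (\<forall>s>0. \<forall>t>0. M s t = K (N s (M s t)) (N (M s t) t))"

definition geo_mean :: "real \<Rightarrow> real \<Rightarrow> real" where
  "geo_mean s t = sqrt (s * t)"

end

theory Submission
  imports Defs
begin

text \<open>Writing \<open>s = a\<^sup>2\<close> and \<open>t = b\<^sup>2\<close>, one has \<open>G(s,t) = ab\<close>, and homogeneity pulls the
  factors \<open>a\<close>, \<open>b\<close> and then \<open>N(a,b)\<close> out of the stabilization equation, which becomes
  \<open>ab = N(a,b) K(a,b)\<close>. This product is symmetric in \<open>K\<close> and \<open>N\<close>, so \<open>G\<close> is
  \<open>(K,N)\<close>-stabilized exactly when it is \<open>(N,K)\<close>-stabilized.\<close>

lemma geo_mean_squares:
  assumes "a \<ge> 0" "b \<ge> 0"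
  shows "geo_mean (a * a) (b * b) = a * b"
  using assms by (simp add: geo_mean_def real_sqrt_mult)

lemma homogeneous_meanD:
  assumes "homogeneous_mean M" "l > 0" "s > 0" "t > 0"
  shows "M (l * s) (l * t) = l * M s t"
  using assms by (simp add: homogeneous_mean_def)

lemma homogeneous_mean_pos:
  assumes "homogeneous_mean M" "s > 0" "t > 0"
  shows "M s t > 0"
  using assms by (simp add: homogeneous_mean_def is_mean_def)

lemma compose_homogeneous_means_squares:
  assumes K: "homogeneous_mean K" and N: "homogeneous_mean N" and a: "a > 0" and b: "b > 0"
  shows "K (N (a * a) (a * b)) (N (a * b) (b * b)) = N a b * K a b"
proof -
  have "N (a * a) (a * b) = N a b * a"
    using homogeneous_meanD[OF N a a b] by simp
  moreover have "N (a * b) (b * b) = N a b * b"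
    using homogeneous_meanD[OF N b a b] by (simp add: mult.commute)
  ultimately show ?thesis
    using homogeneous_meanD[OF K homogeneous_mean_pos[OF N a b] a b] by simp
qed

lemma all_pos_reals_squares:
  fixes P :: "real \<Rightarrow> real \<Rightarrow> bool"
  shows "(\<forall>s>0. \<forall>t>0. P s t) \<longleftrightarrow> (\<forall>a>0. \<forall>b>0. P (a * a) (b * b))"
proof
  assume squares: "\<forall>a>0. \<forall>b>0. P (a * a) (b * b)"
  show "\<forall>s>0. \<forall>t>0. P s t"
  proof (intro allI impI)
    fix s t :: real assume "s > 0" "t > 0"
    then show "P s t"
      using squares[rule_format, of "sqrt s" "sqrt t"] by simp
  qed
qed (simp add: mult_pos_pos)

lemma stabilized_geo_mean_iff:
  assumes K: "homogeneous_mean K" and N: "homogeneous_mean N"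
  shows "stabilized geo_mean K N \<longleftrightarrow> (\<forall>a>0. \<forall>b>0. N a b * K a b = a * b)"
proof -
  have "geo_mean (a * a) (b * b) =
      K (N (a * a) (geo_mean (a * a) (b * b))) (N (geo_mean (a * a) (b * b)) (b * b))
      \<longleftrightarrow> N a b * K a b = a * b" if "a > 0" "b > 0" for a b
    using that compose_homogeneous_means_squares[OF K N that]
    by (auto simp: geo_mean_squares)
  then show ?thesis
    unfolding stabilized_def by (subst all_pos_reals_squares) blast
qed

theorem mainTheorem11:
  fixes K N :: "real \<Rightarrow> real \<Rightarrow> real"
  assumes "homogeneous_mean K" and "homogeneous_mean N"
    and "stabilized geo_mean K N"
  shows "(\<forall>s>0. \<forall>t>0. geo_mean s t = N (sqrt s) (sqrt t) * K (sqrt s) (sqrt t))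
    \<and> stabilized geo_mean N K
    \<and> (\<forall>s>0. \<forall>t>0. N s t * K s t = s * t \<and> geo_mean (N s t) (K s t) = geo_mean s t)"
proof -
  have product: "\<forall>a>0. \<forall>b>0. N a b * K a b = a * b"
    using stabilized_geo_mean_iff assms by blast
  then have "stabilized geo_mean N K"
    using stabilized_geo_mean_iff[OF assms(2,1)] by (simp add: mult.commute)
  moreover have "geo_mean s t = N (sqrt s) (sqrt t) * K (sqrt s) (sqrt t)" if "s > 0" "t > 0" for s t
    using product that by (simp add: geo_mean_def real_sqrt_mult)
  ultimately show ?thesis
    using product by (simp add: geo_mean_def)
qed

end
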